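(* Let $F$ be a field, $V$ a nonzero vector space over $F$, $\Gamma$ a nonempty set and $\varphi:\Gamma\to\Gamma$ a map. Let $\sigma_\varphi:V^\Gamma\to V^\Gamma$, $(x_\alpha)_{\alpha\in\Gamma}\mapsto(x_{\varphi(\alpha)})_{\alpha\in\Gamma}$. Then \[{\rm Eigen}(\sigma_\varphi,V^\Gamma)=\begin{cases} \{r\in F\setminus\{0\}: \exists\theta\in P(\varphi)\ \ o(r)\mid per(\theta)\}, & W(\varphi)=\varnothing,\ \Gamma=\varphi(\Gamma),\\ \{r\in F\setminus\{0\}: \exists\theta\in P(\varphi)\ \ o(r)\mid per(\theta)\}\cup\{0\}, & W(\varphi)=\varnothing,\ \Gamma\neq\varphi(\Gamma),\\ F\setminus\{0\}, & W(\varphi)\neq\varnothing,\ \Gamma=\varphi(\Gamma),\\ F, & W(\varphi)\neq\varnothing,\ \Gamma\neq\varphi(\Gamma), \end{cases}\] where for $r\in F\setminus\{0\}$, $o(r)$ is the order of $r$ in the multiplicative group $F\setminus\{0\}$ (the condition $o(r)\mid per(\theta)$ meaning $r$ has finite order dividing $per(\theta)$).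
   Context: For a linear map $T:W\to W$ on an $F$-vector space $W$, ${\rm Eigen}(T,W)$ is the set of all $r\in F$ such that $T(x)=rx$ for some nonzero $x\in W$. A point $a\in\Gamma$ is wandering if the sequence $(\varphi^n(a))_{n\geq1}$ is one-to-one; $W(\varphi)$ is the set of wandering points. $a$ is periodic if $\varphi^n(a)=a$ for some $n\geq1$; $P(\varphi)$ is the set of periodic points, and for $\alpha\in P(\varphi)$, $per(\alpha)=\min\{n\geq1:\varphi^n(\alpha)=\alpha\}$. *)

theory Defs
  imports Main HOL.Vector_Spaces "HOL-Library.Function_Algebras"
begin

definition Eigen :: "('f \<Rightarrow> 'w::zero \<Rightarrow> 'w) \<Rightarrow> ('w \<Rightarrow> 'w) \<Rightarrow> 'w set \<Rightarrow> ('f::field) set" where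
  "Eigen scale T W = {r. \<exists>x\<in>W. x \<noteq> 0 \<and> T x = scale r x}"

text \<open>The shift sigma_phi on V^Gamma (Gamma = the universe of type 'a).\<close>
definition sigma :: "('a \<Rightarrow> 'a) \<Rightarrow> ('a \<Rightarrow> 'v) \<Rightarrow> ('a \<Rightarrow> 'v)" where
  "sigma \<phi> x = (\<lambda>\<alpha>. x (\<phi> \<alpha>))"

definition fun_scale :: "('f \<Rightarrow> 'v \<Rightarrow> 'v) \<Rightarrow> 'f \<Rightarrow> ('a \<Rightarrow> 'v) \<Rightarrow> ('a \<Rightarrow> 'v)" where
  "fun_scale scale r x = (\<lambda>\<alpha>. scale r (x \<alpha>))"

definition wandering :: "('a \<Rightarrow> 'a) \<Rightarrow> 'a \<Rightarrow> bool" where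
  "wandering \<phi> a \<longleftrightarrow> inj_on (\<lambda>n::nat. (\<phi> ^^ n) a) {1..}"

definition wandering_points :: "('a \<Rightarrow> 'a) \<Rightarrow> 'a set" where
  "wandering_points \<phi> = {a. wandering \<phi> a}"

definition periodic_points :: "('a \<Rightarrow> 'a) \<Rightarrow> 'a set" where
  "periodic_points \<phi> = {a. \<exists>n::nat. n \<ge> 1 \<and> (\<phi> ^^ n) a = a}"

definition per :: "('a \<Rightarrow> 'a) \<Rightarrow> 'a \<Rightarrow> nat" where
  "per \<phi> \<alpha> = (LEAST n. n \<ge> 1 \<and> (\<phi> ^^ n) \<alpha> = \<alpha>)"

text \<open>Order of r in the multiplicative group F - {0}; 0 encodes infinite order.\<close>
definition mult_order :: "'f::field \<Rightarrow> nat" where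
  "mult_order r = (if \<exists>n::nat. n \<ge> 1 \<and> r ^ n = 1 then (LEAST n. n \<ge> 1 \<and> r ^ n = 1) else 0)"

definition periodic_eigs :: "('a \<Rightarrow> 'a) \<Rightarrow> 'f::field set" where
  "periodic_eigs \<phi> = {r. r \<noteq> 0 \<and> (\<exists>\<theta>\<in>periodic_points \<phi>.
       mult_order r \<noteq> 0 \<and> mult_order r dvd per \<phi> \<theta>)}"

end

theory Submission
  imports Defs
begin

text \<open>
  An eigenvector x of \<open>\<sigma>\<^sub>\<phi>\<close> for r satisfies \<open>x (\<phi> \<alpha>) = r x \<alpha>\<close>, hence
  \<open>x (\<phi>\<^sup>n \<alpha>) = r\<^sup>n x \<alpha>\<close>. For \<open>r = 0\<close> this says that x vanishes on the range of \<open>\<phi>\<close>, so 0 is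
  an eigenvalue iff \<open>\<phi>\<close> is not onto. For \<open>r \<noteq> 0\<close>, putting \<open>x \<beta> = (r\<^sup>k / r\<^sup>m) v\<close> whenever
  \<open>\<phi>\<^sup>m \<beta> = \<phi>\<^sup>k a\<close>, and 0 off the grand orbit of a, defines an eigenvector as soon as
  \<open>\<phi>\<^sup>i a = \<phi>\<^sup>j a\<close> forces \<open>r\<^sup>i = r\<^sup>j\<close>. This holds for every \<open>r \<noteq> 0\<close> when a is wandering, and
  when a lies on a cycle of length p with \<open>r\<^sup>p = 1\<close>. Conversely, if no point wanders, the orbit
  of a point where x does not vanish runs into a cycle on which x does not vanish either, and
  going once round that cycle gives \<open>r\<^sup>p = 1\<close>.
\<close>

lemma Least_pos_dvd:
  fixes P :: "nat \<Rightarrow> bool"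
  assumes diff_closed: "\<And>m n. P m \<Longrightarrow> P n \<Longrightarrow> m \<le> n \<Longrightarrow> P (n - m)"
    and "P n"
  shows "(LEAST d. d \<ge> 1 \<and> P d) dvd n"
  using \<open>P n\<close>
proof (induction n rule: less_induct)
  case (less n)
  define d where "d = (LEAST d. d \<ge> 1 \<and> P d)"
  show ?case
  proof (cases "n = 0")
    case False
    then have "n \<ge> 1 \<and> P n" using less.prems by simp
    then have d: "d \<ge> 1 \<and> P d" "d \<le> n"
      unfolding d_def by (rule LeastI, rule Least_le)
    show ?thesis
    proof (cases "d = n")
      case False
      have "n - d < n"
        using d \<open>n \<noteq> 0\<close> by simp
      moreover have "P (n - d)"
        using diff_closed d less.prems by blast
      ultimately have "d dvd n - d"
        unfolding d_def by (rule less.IH)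
      then show ?thesis
        unfolding d_def by (rule dvd_diffD[OF _ dvd_refl d(2)[unfolded d_def]])
    qed (simp add: d_def)
  qed simp
qed

lemma mult_order_dvd_iff:
  fixes r :: "'f::field"
  assumes "n > 0"
  shows "mult_order r \<noteq> 0 \<and> mult_order r dvd n \<longleftrightarrow> r ^ n = 1"
proof
  assume order: "mult_order r \<noteq> 0 \<and> mult_order r dvd n"
  have ex: "\<exists>d::nat. d \<ge> 1 \<and> r ^ d = 1"
    using order unfolding mult_order_def by (auto split: if_splits)
  then have "r ^ mult_order r = 1"
    unfolding mult_order_def using LeastI_ex[OF ex] by simp
  moreover obtain q where "n = mult_order r * q"
    using order by blast
  ultimately show "r ^ n = 1"
    by (simp add: power_mult)
next
  assume "r ^ n = 1"
  with \<open>n > 0\<close> have ex: "\<exists>d::nat. d \<ge> 1 \<and> r ^ d = 1"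
    by (intro exI[of _ n]) simp
  have "r ^ (k - m) = 1" if "r ^ m = 1" "r ^ k = 1" "m \<le> k" for m k
  proof -
    have "r ^ k = r ^ (k - m) * r ^ m"
      using \<open>m \<le> k\<close> by (simp flip: power_add)
    with that show ?thesis
      by simp
  qed
  then have "(LEAST d. d \<ge> 1 \<and> r ^ d = 1) dvd n"
    using \<open>r ^ n = 1\<close> by (rule Least_pos_dvd[where P = "\<lambda>d. r ^ d = 1"])
  moreover have "(LEAST d. d \<ge> 1 \<and> r ^ d = 1) \<ge> 1"
    using LeastI_ex[OF ex] by simp
  ultimately show "mult_order r \<noteq> 0 \<and> mult_order r dvd n"
    unfolding mult_order_def using ex by simp
qed

lemma
  assumes "\<theta> \<in> periodic_points \<phi>"
  shows per_pos: "per \<phi> \<theta> > 0"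
    and funpow_per: "(\<phi> ^^ per \<phi> \<theta>) \<theta> = \<theta>"
proof -
  have ex: "\<exists>n::nat. n \<ge> 1 \<and> (\<phi> ^^ n) \<theta> = \<theta>"
    using assms unfolding periodic_points_def by blast
  show "per \<phi> \<theta> > 0" "(\<phi> ^^ per \<phi> \<theta>) \<theta> = \<theta>"
    using LeastI_ex[OF ex] unfolding per_def by auto
qed

lemma per_dvd:
  assumes "(\<phi> ^^ n) \<theta> = \<theta>"
  shows "per \<phi> \<theta> dvd n"
proof -
  have "(\<phi> ^^ (k - m)) \<theta> = \<theta>" if "(\<phi> ^^ m) \<theta> = \<theta>" "(\<phi> ^^ k) \<theta> = \<theta>" "m \<le> k" for m k
  proof -
    have "(\<phi> ^^ (k - m)) \<theta> = (\<phi> ^^ (k - m)) ((\<phi> ^^ m) \<theta>)"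
      using that(1) by simp
    also have "\<dots> = (\<phi> ^^ (k - m + m)) \<theta>"
      by (simp add: funpow_add)
    finally show ?thesis
      using that(2) \<open>m \<le> k\<close> by simp
  qed
  then show ?thesis
    unfolding per_def using assms by (rule Least_pos_dvd[where P = "\<lambda>d. (\<phi> ^^ d) \<theta> = \<theta>"])
qed

lemma per_dvd_diff_if_funpow_eq:
  assumes "\<theta> \<in> periodic_points \<phi>" and "(\<phi> ^^ i) \<theta> = (\<phi> ^^ j) \<theta>" and "i \<le> j"
  shows "per \<phi> \<theta> dvd j - i"
proof -
  define p where "p = per \<phi> \<theta>"
  have "i \<le> p * i"
    using per_pos[OF assms(1)] by (simp add: p_def)
  have back_to_\<theta>: "(\<phi> ^^ (p * i)) \<theta> = \<theta>"
    using funpow_mod_eq[where f = \<phi> and n = p and x = \<theta> and m = "p * i"] funpow_per[OF assms(1)]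
    by (simp add: p_def)
  \<comment> \<open>Apply \<open>\<phi>\<^bsup>p i - i\<^esup>\<close> to both sides of \<open>\<phi>\<^sup>i \<theta> = \<phi>\<^sup>j \<theta>\<close>: as \<open>\<phi>\<^bsup>p i\<^esup>\<close> fixes \<theta>,
    one side becomes \<theta> and the other \<open>\<phi>\<^bsup>j - i\<^esup> \<theta>\<close>.\<close>
  have exponents: "(j - i) + p * i = (p * i - i) + j"
    using \<open>i \<le> j\<close> \<open>i \<le> p * i\<close> by simp
  have "(\<phi> ^^ (j - i)) \<theta> = (\<phi> ^^ (j - i)) ((\<phi> ^^ (p * i)) \<theta>)"
    using back_to_\<theta> by simp
  also have "\<dots> = (\<phi> ^^ ((p * i - i) + j)) \<theta>"
    unfolding exponents[symmetric] by (simp add: funpow_add)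
  also have "\<dots> = (\<phi> ^^ (p * i - i)) ((\<phi> ^^ i) \<theta>)"
    using assms(2) by (simp add: funpow_add)
  also have "\<dots> = (\<phi> ^^ ((p * i - i) + i)) \<theta>"
    by (simp add: funpow_add)
  also have "\<dots> = \<theta>"
    using \<open>i \<le> p * i\<close> back_to_\<theta> by simp
  finally show ?thesis
    unfolding p_def by (rule per_dvd)
qed

lemma periodic_eigs_iff:
  "r \<in> periodic_eigs \<phi> \<longleftrightarrow> (\<exists>\<theta>\<in>periodic_points \<phi>. r ^ per \<phi> \<theta> = 1)"
proof -
  have "mult_order r \<noteq> 0 \<and> mult_order r dvd per \<phi> \<theta> \<longleftrightarrow> r ^ per \<phi> \<theta> = 1"
    if "\<theta> \<in> periodic_points \<phi>" for \<theta>
    using mult_order_dvd_iff per_pos[OF that] by blast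
  moreover have "r \<noteq> 0" if "\<theta> \<in> periodic_points \<phi>" and "r ^ per \<phi> \<theta> = 1" for \<theta>
    using that per_pos[OF that(1)] by (auto simp: zero_power)
  ultimately show ?thesis
    unfolding periodic_eigs_def by blast
qed

lemma zero_notin_periodic_eigs [simp]: "0 \<notin> periodic_eigs \<phi>"
  by (simp add: periodic_eigs_def)

lemma funpow_eq_imp_eq_if_wandering:
  assumes "wandering \<phi> a" and "(\<phi> ^^ i) a = (\<phi> ^^ j) a"
  shows "i = j"
proof -
  have "Suc i = Suc j"
    by (rule inj_onD[OF assms(1)[unfolded wandering_def]]) (use assms(2) in auto)
  then show ?thesis
    by simp
qed

lemma funpow_periodic_if_not_wandering:
  assumes "\<not> wandering \<phi> \<alpha>"
  obtains i where "(\<phi> ^^ i) \<alpha> \<in> periodic_points \<phi>"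
proof -
  obtain m n :: nat where "m \<noteq> n" and mn: "(\<phi> ^^ m) \<alpha> = (\<phi> ^^ n) \<alpha>"
    using assms unfolding wandering_def inj_on_def by blast
  obtain i j where "i < j" and eq: "(\<phi> ^^ i) \<alpha> = (\<phi> ^^ j) \<alpha>"
  proof (cases "m < n")
    case True
    then show ?thesis
      using mn by (rule that)
  next
    case False
    with \<open>m \<noteq> n\<close> have "n < m"
      by simp
    then show ?thesis
      using mn[symmetric] by (rule that)
  qed
  have "(\<phi> ^^ (j - i)) ((\<phi> ^^ i) \<alpha>) = (\<phi> ^^ (j - i + i)) \<alpha>"
    by (simp add: funpow_add)
  also have "\<dots> = (\<phi> ^^ i) \<alpha>"
    using \<open>i < j\<close> eq by simp
  finally have "(\<phi> ^^ (j - i)) ((\<phi> ^^ i) \<alpha>) = (\<phi> ^^ i) \<alpha>" .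
  moreover have "j - i \<ge> 1"
    using \<open>i < j\<close> by simp
  ultimately have "(\<phi> ^^ i) \<alpha> \<in> periodic_points \<phi>"
    unfolding periodic_points_def by blast
  then show ?thesis
    by (rule that)
qed

lemma scalar_eigenfunction_exists:
  fixes r :: "'f::field"
  assumes "r \<noteq> 0" and compatible: "\<And>i j. (\<phi> ^^ i) a = (\<phi> ^^ j) a \<Longrightarrow> r ^ i = r ^ j"
  shows "\<exists>c. c a = 1 \<and> (\<forall>\<beta>. c (\<phi> \<beta>) = r * c \<beta>)"
proof -
  define meets where "meets \<beta> m k \<longleftrightarrow> (\<phi> ^^ m) \<beta> = (\<phi> ^^ k) a" for \<beta> m k
  have well_defined: "r ^ k / r ^ m = r ^ k' / r ^ m'"
    if "meets \<beta> m k" "meets \<beta> m' k'" for \<beta> m k m' k'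
  proof -
    have "(\<phi> ^^ (m' + k)) a = (\<phi> ^^ (m' + m)) \<beta>" "(\<phi> ^^ (m + k')) a = (\<phi> ^^ (m + m')) \<beta>"
      using that by (simp_all add: funpow_add meets_def)
    then have "(\<phi> ^^ (m' + k)) a = (\<phi> ^^ (m + k')) a"
      by (simp add: add.commute)
    then have "r ^ m' * r ^ k = r ^ m * r ^ k'"
      unfolding power_add[symmetric] by (rule compatible)
    with \<open>r \<noteq> 0\<close> show ?thesis
      by (simp add: field_simps)
  qed
  define c where "c \<beta> = (if \<exists>m k. meets \<beta> m k
      then THE s. \<exists>m k. meets \<beta> m k \<and> s = r ^ k / r ^ m else 0)" for \<beta>
  have c_eq: "c \<beta> = r ^ k / r ^ m" if "meets \<beta> m k" for \<beta> m k
  proof -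
    have "(THE s. \<exists>m k. meets \<beta> m k \<and> s = r ^ k / r ^ m) = r ^ k / r ^ m"
      by (rule the_equality) (use that well_defined in blast)+
    with that show ?thesis
      unfolding c_def by auto
  qed
  have "c (\<phi> \<beta>) = r * c \<beta>" for \<beta>
  proof (cases "\<exists>m k. meets \<beta> m k")
    case True
    then obtain m k where "meets \<beta> m k" by blast
    then have "meets (\<phi> \<beta>) m (Suc k)"
      unfolding meets_def by (simp add: funpow_swap1[symmetric])
    with c_eq \<open>meets \<beta> m k\<close> show ?thesis
      by simp
  next
    case False
    have "meets \<beta> (Suc m) k" if "meets (\<phi> \<beta>) m k" for m k
      using that unfolding meets_def by (simp add: funpow_swap1[symmetric])
    with False have False': "\<not> (\<exists>m k. meets (\<phi> \<beta>) m k)"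
      by blast
    show ?thesis
      unfolding c_def if_not_P[OF False] if_not_P[OF False'] by simp
  qed
  moreover have "c a = 1"
    using c_eq[of a 0 0] by (simp add: meets_def)
  ultimately show ?thesis
    by blast
qed

lemma Eigen_sigma_iff:
  "r \<in> Eigen (fun_scale scale) (sigma \<phi>) UNIV \<longleftrightarrow>
     (\<exists>x. x \<noteq> 0 \<and> (\<forall>\<alpha>. x (\<phi> \<alpha>) = scale r (x \<alpha>)))"
  unfolding Eigen_def sigma_def fun_scale_def by (simp add: fun_eq_iff)

context vector_space
begin

lemma eigenfunction_funpow:
  assumes "\<And>\<alpha>. x (\<phi> \<alpha>) = r *s x \<alpha>"
  shows "x ((\<phi> ^^ n) \<alpha>) = r ^ n *s x \<alpha>"
  by (induction n) (simp_all add: assms)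

lemma Eigen_sigma_if_compatible:
  assumes "\<exists>v::'b. v \<noteq> 0" and "r \<noteq> 0"
    and "\<And>i j. (\<phi> ^^ i) a = (\<phi> ^^ j) a \<Longrightarrow> r ^ i = r ^ j"
  shows "r \<in> Eigen (fun_scale scale) (sigma \<phi>) UNIV"
proof -
  obtain v :: 'b where "v \<noteq> 0"
    using assms(1) by blast
  obtain c where "c a = 1" and c: "\<And>\<beta>. c (\<phi> \<beta>) = r * c \<beta>"
    using scalar_eigenfunction_exists[of r \<phi> a] assms(2,3) by blast
  have "(\<lambda>\<beta>. c \<beta> *s v) \<noteq> 0"
    using \<open>c a = 1\<close> \<open>v \<noteq> 0\<close> by (metis scale_one zero_fun_def)
  moreover have "c (\<phi> \<beta>) *s v = r *s (c \<beta> *s v)" for \<beta>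
    by (simp add: c)
  ultimately show ?thesis
    unfolding Eigen_sigma_iff by blast
qed

lemma Eigen_sigma_if_wandering:
  assumes "\<exists>v::'b. v \<noteq> 0" and "wandering \<phi> a" and "r \<noteq> 0"
  shows "r \<in> Eigen (fun_scale scale) (sigma \<phi>) UNIV"
proof (rule Eigen_sigma_if_compatible[OF assms(1,3)])
  fix i j
  assume "(\<phi> ^^ i) a = (\<phi> ^^ j) a"
  then have "i = j"
    by (rule funpow_eq_imp_eq_if_wandering[OF assms(2)])
  then show "r ^ i = r ^ j"
    by simp
qed

lemma Eigen_sigma_if_periodic_eigs:
  assumes "\<exists>v::'b. v \<noteq> 0" and "r \<in> periodic_eigs \<phi>"
  shows "r \<in> Eigen (fun_scale scale) (sigma \<phi>) UNIV"
proof -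
  obtain \<theta> where \<theta>: "\<theta> \<in> periodic_points \<phi>" and "r ^ per \<phi> \<theta> = 1"
    using assms(2) unfolding periodic_eigs_iff by blast
  have ordered: "r ^ i = r ^ j" if ij: "(\<phi> ^^ i) \<theta> = (\<phi> ^^ j) \<theta>" "i \<le> j" for i j
  proof -
    obtain q where "j - i = per \<phi> \<theta> * q"
      using per_dvd_diff_if_funpow_eq[OF \<theta> ij] by (rule dvdE)
    with \<open>i \<le> j\<close> have "j = i + per \<phi> \<theta> * q"
      by simp
    then show ?thesis
      using \<open>r ^ per \<phi> \<theta> = 1\<close> by (simp add: power_add power_mult)
  qed
  have "r ^ i = r ^ j" if "(\<phi> ^^ i) \<theta> = (\<phi> ^^ j) \<theta>" for i j
  proof (cases "i \<le> j")
    case True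
    with that show ?thesis
      by (rule ordered)
  next
    case False
    with that show ?thesis
      using ordered[of j i] by simp
  qed
  moreover have "r \<noteq> 0"
    using \<open>r ^ per \<phi> \<theta> = 1\<close> per_pos[OF \<theta>] by (auto simp: zero_power)
  ultimately show ?thesis
    using assms(1) by (intro Eigen_sigma_if_compatible)
qed

lemma periodic_eigs_if_Eigen_sigma:
  assumes "wandering_points \<phi> = {}" and "r \<noteq> 0"
    and "r \<in> Eigen (fun_scale scale) (sigma \<phi>) UNIV"
  shows "r \<in> periodic_eigs \<phi>"
proof -
  obtain x where "x \<noteq> 0" and x: "\<And>\<alpha>. x (\<phi> \<alpha>) = r *s x \<alpha>"
    using assms(3) unfolding Eigen_sigma_iff by blast
  then obtain \<alpha> where "x \<alpha> \<noteq> 0"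
    by (auto simp: fun_eq_iff)
  have iterate: "x ((\<phi> ^^ n) \<beta>) = r ^ n *s x \<beta>" for n \<beta>
    by (rule eigenfunction_funpow) (rule x)
  have "\<not> wandering \<phi> \<alpha>"
    using assms(1) by (simp add: wandering_points_def)
  then obtain i where periodic: "(\<phi> ^^ i) \<alpha> \<in> periodic_points \<phi>"
    by (rule funpow_periodic_if_not_wandering)
  define \<theta> where "\<theta> = (\<phi> ^^ i) \<alpha>"
  have \<theta>: "\<theta> \<in> periodic_points \<phi>"
    using periodic by (simp add: \<theta>_def)
  have "x \<theta> = r ^ i *s x \<alpha>"
    unfolding \<theta>_def by (rule iterate)
  with \<open>x \<alpha> \<noteq> 0\<close> \<open>r \<noteq> 0\<close> have "x \<theta> \<noteq> 0"
    by simp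
  have "1 *s x \<theta> = x ((\<phi> ^^ per \<phi> \<theta>) \<theta>)"
    using funpow_per[OF \<theta>] by simp
  also have "\<dots> = r ^ per \<phi> \<theta> *s x \<theta>"
    by (rule iterate)
  finally have "1 = r ^ per \<phi> \<theta> \<or> x \<theta> = 0"
    by (simp only: scale_cancel_right)
  with \<open>x \<theta> \<noteq> 0\<close> have "r ^ per \<phi> \<theta> = 1"
    by simp
  with \<theta> show ?thesis
    unfolding periodic_eigs_iff by blast
qed

lemma zero_in_Eigen_sigma_iff:
  assumes "\<exists>v::'b. v \<noteq> 0"
  shows "0 \<in> Eigen (fun_scale scale) (sigma \<phi>) UNIV \<longleftrightarrow> range \<phi> \<noteq> UNIV"
proof
  assume "0 \<in> Eigen (fun_scale scale) (sigma \<phi>) UNIV"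
  then obtain x :: "'c \<Rightarrow> 'b" where "x \<noteq> 0" and vanishes: "\<forall>\<alpha>. x (\<phi> \<alpha>) = 0"
    unfolding Eigen_sigma_iff by auto
  then obtain \<beta> where "x \<beta> \<noteq> 0"
    by (auto simp: fun_eq_iff)
  with vanishes show "range \<phi> \<noteq> UNIV"
    by (metis UNIV_I imageE)
next
  assume "range \<phi> \<noteq> UNIV"
  then obtain b where "b \<notin> range \<phi>"
    by blast
  obtain v :: 'b where "v \<noteq> 0"
    using assms by blast
  have "(\<lambda>\<beta>. if \<beta> = b then v else 0) \<noteq> 0"
    using \<open>v \<noteq> 0\<close> by (auto simp: fun_eq_iff)
  moreover have "(if \<phi> \<alpha> = b then v else 0) = 0 *s (if \<alpha> = b then v else 0)" for \<alpha>
    using \<open>b \<notin> range \<phi>\<close> by auto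
  ultimately show "0 \<in> Eigen (fun_scale scale) (sigma \<phi>) UNIV"
    unfolding Eigen_sigma_iff by blast
qed

lemma Eigen_sigma_minus_zero:
  assumes "\<exists>v::'b. v \<noteq> 0"
  shows "Eigen (fun_scale scale) (sigma \<phi>) UNIV - {0} =
    (if wandering_points \<phi> = {} then periodic_eigs \<phi> else UNIV - {0})"
proof (cases "wandering_points \<phi> = {}")
  case True
  have members: "r \<in> Eigen (fun_scale scale) (sigma \<phi>) UNIV - {0} \<longleftrightarrow> r \<in> periodic_eigs \<phi>"
    for r
  proof
    assume "r \<in> Eigen (fun_scale scale) (sigma \<phi>) UNIV - {0}"
    then show "r \<in> periodic_eigs \<phi>"
      using periodic_eigs_if_Eigen_sigma[OF True] by simp
  next
    assume r: "r \<in> periodic_eigs \<phi>"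
    then have "r \<noteq> 0"
      using zero_notin_periodic_eigs by metis
    with r show "r \<in> Eigen (fun_scale scale) (sigma \<phi>) UNIV - {0}"
      using Eigen_sigma_if_periodic_eigs[OF assms r] by simp
  qed
  show ?thesis
    unfolding if_P[OF True] by (rule set_eqI) (rule members)
next
  case False
  then obtain a where "a \<in> wandering_points \<phi>"
    by blast
  then have members: "r \<in> Eigen (fun_scale scale) (sigma \<phi>) UNIV - {0} \<longleftrightarrow> r \<in> UNIV - {0}"
    for r
    using Eigen_sigma_if_wandering[OF assms, of \<phi> a r] by (auto simp: wandering_points_def)
  show ?thesis
    unfolding if_not_P[OF False] by (rule set_eqI) (rule members)
qed

lemma Eigen_sigma_eq:
  assumes "\<exists>v::'b. v \<noteq> 0"
  shows "Eigen (fun_scale scale) (sigma \<phi>) UNIV =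
    (if wandering_points \<phi> = {} then periodic_eigs \<phi> else UNIV - {0})
    \<union> (if range \<phi> = UNIV then {} else {0})"
proof (rule set_eqI)
  fix r
  show "r \<in> Eigen (fun_scale scale) (sigma \<phi>) UNIV \<longleftrightarrow>
    r \<in> (if wandering_points \<phi> = {} then periodic_eigs \<phi> else UNIV - {0})
      \<union> (if range \<phi> = UNIV then {} else {0})"
  proof (cases "r = 0")
    case True
    then show ?thesis
      using zero_in_Eigen_sigma_iff[OF assms, of \<phi>] by simp
  next
    case False
    then have "r \<in> Eigen (fun_scale scale) (sigma \<phi>) UNIV \<longleftrightarrow>
        r \<in> Eigen (fun_scale scale) (sigma \<phi>) UNIV - {0}"
      by simp
    also have "\<dots> \<longleftrightarrow> r \<in> (if wandering_points \<phi> = {} then periodic_eigs \<phi> else UNIV - {0})"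
      unfolding Eigen_sigma_minus_zero[OF assms] ..
    finally show ?thesis
      using False by simp
  qed
qed

end

theorem corollary2p11:
  fixes scale :: "'f::field \<Rightarrow> 'v::ab_group_add \<Rightarrow> 'v"
    and \<phi> :: "'a \<Rightarrow> 'a"
  assumes "vector_space scale"
    and "\<exists>v::'v. v \<noteq> 0"
  shows "(wandering_points \<phi> = {} \<and> range \<phi> = UNIV \<longrightarrow>
            Eigen (fun_scale scale) (sigma \<phi>) (UNIV :: ('a \<Rightarrow> 'v) set) = periodic_eigs \<phi>)
       \<and> (wandering_points \<phi> = {} \<and> range \<phi> \<noteq> UNIV \<longrightarrow>
            Eigen (fun_scale scale) (sigma \<phi>) (UNIV :: ('a \<Rightarrow> 'v) set) = periodic_eigs \<phi> \<union> {0})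
       \<and> (wandering_points \<phi> \<noteq> {} \<and> range \<phi> = UNIV \<longrightarrow>
            Eigen (fun_scale scale) (sigma \<phi>) (UNIV :: ('a \<Rightarrow> 'v) set) = UNIV - {0})
       \<and> (wandering_points \<phi> \<noteq> {} \<and> range \<phi> \<noteq> UNIV \<longrightarrow>
            Eigen (fun_scale scale) (sigma \<phi>) (UNIV :: ('a \<Rightarrow> 'v) set) = UNIV)"
  using vector_space.Eigen_sigma_eq[OF assms, of \<phi>] by simp

end
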